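(* If a nondegenerate triangle is circumscribed about a hyperbola one of whose foci coincides with the circumcenter of the triangle, then the eccentricity $e$ of the hyperbola satisfies $1<e<3$.
   Context: A triangle is circumscribed about a conic if each of its three sidelines is tangent to the conic. The eccentricity of a hyperbola is $e=c/a$ where $c$ is half the distance between the foci and $a$ is the semi-transverse axis. *)

theory Defs
  imports "HOL-Analysis.Analysis"
begin

definition is_hyperbola :: "real^2 \<Rightarrow> real^2 \<Rightarrow> real \<Rightarrow> bool" where
  "is_hyperbola F1 F2 a \<longleftrightarrow> 0 < a \<and> 2 * a < dist F1 F2"

definition hyperbola :: "real^2 \<Rightarrow> real^2 \<Rightarrow> real \<Rightarrow> (real^2) set" where
  "hyperbola F1 F2 a = {P. \<bar>dist P F1 - dist P F2\<bar> = 2 * a}"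

definition hyperbola_eccentricity :: "real^2 \<Rightarrow> real^2 \<Rightarrow> real \<Rightarrow> real" where
  "hyperbola_eccentricity F1 F2 a = (dist F1 F2 / 2) / a"

definition line_through :: "real^2 \<Rightarrow> real^2 \<Rightarrow> (real^2) set" where
  "line_through A B = {A + t *\<^sub>R (B - A) | t. True}"

text \<open>A line L is tangent to the hyperbola if it passes through a point P of the
  hyperbola and, along L (parametrised through P with nonzero direction d), the defining
  function dist X F1 - dist X F2 of the hyperbola has vanishing derivative at P, i.e. L is
  the tangent line of the (smooth) level curve at P.\<close>
definition tangent_to_hyperbola :: "real^2 \<Rightarrow> real^2 \<Rightarrow> real \<Rightarrow> (real^2) set \<Rightarrow> bool" where
  "tangent_to_hyperbola F1 F2 a L \<longleftrightarrow>
     (\<exists>P d. d \<noteq> 0 \<and> P \<in> hyperbola F1 F2 a \<and> L = {P + t *\<^sub>R d | t. True} \<and>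
        ((\<lambda>t. dist (P + t *\<^sub>R d) F1 - dist (P + t *\<^sub>R d) F2) has_real_derivative 0) (at 0))"

definition circumscribed_about_hyperbola ::
  "real^2 \<Rightarrow> real^2 \<Rightarrow> real^2 \<Rightarrow> real^2 \<Rightarrow> real^2 \<Rightarrow> real \<Rightarrow> bool" where
  "circumscribed_about_hyperbola A B C F1 F2 a \<longleftrightarrow>
     tangent_to_hyperbola F1 F2 a (line_through A B) \<and>
     tangent_to_hyperbola F1 F2 a (line_through B C) \<and>
     tangent_to_hyperbola F1 F2 a (line_through C A)"

text \<open>Q is the circumcenter of triangle ABC (equidistant from the vertices; unique for a
  nondegenerate triangle).\<close>
definition is_circumcenter :: "real^2 \<Rightarrow> real^2 \<Rightarrow> real^2 \<Rightarrow> real^2 \<Rightarrow> bool" where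
  "is_circumcenter Q A B C \<longleftrightarrow> dist Q A = dist Q B \<and> dist Q B = dist Q C"

end

theory Submission
  imports Defs
begin

text \<open>The feet of the perpendiculars from a focus to the tangents of a hyperbola lie on
  its auxiliary circle, the circle of radius \<open>a\<close> about the centre. When the focus \<open>F1\<close>
  is the circumcentre \<open>O\<close> of \<open>ABC\<close>, these feet are the midpoints of the sides, so the
  auxiliary circle is the nine-point circle: its centre \<open>(F1 + F2)/2\<close> is the nine-point
  centre \<open>(O + H)/2\<close> and \<open>a = R/2\<close>. Hence \<open>F2\<close> is the orthocentre
  \<open>H = A + B + C - 2O\<close>, and \<open>2c = |OH| = |(A - O) + (B - O) + (C - O)| < 3R = 6a\<close>,
  while \<open>c > a\<close> for every hyperbola.\<close>

lemma inner_real2: "inner (x::real^2) y = x$1 * y$1 + x$2 * y$2"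
  by (simp add: inner_vec_def sum_2)

lemma collinear_if_orthogonal_to_nonzero:
  fixes x y w :: "real^2"
  assumes "w \<noteq> 0" "inner x w = 0" "inner y w = 0"
  shows "collinear {0, x, y}"
proof -
  have ox: "x$1 * w$1 + x$2 * w$2 = 0" and oy: "y$1 * w$1 + y$2 * w$2 = 0"
    using assms(2,3) by (simp_all add: inner_real2)
  have "w$1 * (x$1 * y$2 - x$2 * y$1) = 0" "w$2 * (x$1 * y$2 - x$2 * y$1) = 0"
    using ox oy by algebra+
  moreover have "w$1 \<noteq> 0 \<or> w$2 \<noteq> 0"
    using assms(1) by (simp add: vec_eq_iff forall_2)
  ultimately have det: "x$1 * y$2 - x$2 * y$1 = 0"
    by auto
  have "(inner x y)\<^sup>2 + (x$1 * y$2 - x$2 * y$1)\<^sup>2 = inner x x * inner y y"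
    unfolding inner_real2 by algebra
  then have "\<bar>inner x y\<bar>\<^sup>2 = (norm x * norm y)\<^sup>2"
    using det by (simp add: power_mult_distrib power2_norm_eq_inner)
  then have "\<bar>inner x y\<bar> = norm x * norm y"
    by (metis abs_ge_zero norm_ge_zero zero_le_mult_iff power2_eq_iff_nonneg)
  then show ?thesis
    by (simp add: norm_cauchy_schwarz_equal)
qed

lemma unit_bisector_inner_sq:
  fixes u v d :: "real^2"
  assumes "norm u = 1" "norm v = 1" "u \<noteq> v" "inner d u = inner d v"
  shows "inner d d * (1 + inner u v) = 2 * (inner d u)\<^sup>2"
proof -
  have uu: "inner u u = 1" and vv: "inner v v = 1"
    using assms(1,2) by (simp_all add: dot_square_norm)
  then have "inner d (u - v) = 0" "inner (u + v) (u - v) = 0"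
    using assms(4) by (simp_all add: inner_simps inner_commute[of v u])
  then have "collinear {0, d, u + v}"
    using assms(3) by (intro collinear_if_orthogonal_to_nonzero[of "u - v"]) auto
  then have "(inner d (u + v))\<^sup>2 = (norm d * norm (u + v))\<^sup>2"
    by (metis norm_cauchy_schwarz_equal power2_abs)
  also have "\<dots> = inner d d * (2 + 2 * inner u v)"
    using uu vv by (simp add: power_mult_distrib power2_norm_eq_inner inner_simps
        inner_commute[of v u])
  finally show ?thesis
    using assms(4) by (simp add: inner_add_right power2_eq_square algebra_simps)
qed

lemma norm_foot_on_bisector:
  fixes u v d :: "'a::real_inner"
  assumes "norm u = 1" "norm v = 1" "d \<noteq> 0" "inner d u = inner d v"
    and bisector: "inner d d * (1 + inner u v) = 2 * (inner d u)\<^sup>2"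
    and foot: "inner (r1 *\<^sub>R u + s *\<^sub>R d) d = 0"
  shows "norm (s *\<^sub>R d + (r1 / 2) *\<^sub>R u + (r2 / 2) *\<^sub>R v) = \<bar>r1 - r2\<bar> / 2"
proof -
  define D \<alpha> w where "D = inner d d" and "\<alpha> = inner d u" and "w = inner u v"
  have "D > 0"
    using assms(3) unfolding D_def by simp
  have k: "D * (1 + w) = 2 * \<alpha>\<^sup>2"
    using bisector unfolding D_def \<alpha>_def w_def .
  have sD: "s * D = - r1 * \<alpha>"
    using foot unfolding D_def \<alpha>_def by (simp add: inner_add_left inner_commute algebra_simps)
  have "inner u u = 1" "inner v v = 1" "inner d v = \<alpha>"
    using assms(1,2,4) unfolding \<alpha>_def by (simp_all add: dot_square_norm)
  then have "(norm (s *\<^sub>R d + (r1 / 2) *\<^sub>R u + (r2 / 2) *\<^sub>R v))\<^sup>2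
      = s\<^sup>2 * D + s * (r1 + r2) * \<alpha> + (r1\<^sup>2 + 2 * r1 * r2 * w + r2\<^sup>2) / 4"
    unfolding power2_norm_eq_inner D_def \<alpha>_def w_def
    by (simp add: inner_add_left inner_add_right inner_commute[of u d] inner_commute[of v d]
        inner_commute[of v u]) (simp add: field_simps power2_eq_square)
  also have "\<dots> = (r1 - r2)\<^sup>2 / 4"
  proof -
    have "D * (s\<^sup>2 * D + s * (r1 + r2) * \<alpha> + (r1\<^sup>2 + 2 * r1 * r2 * w + r2\<^sup>2) / 4)
        = (s * D)\<^sup>2 + (s * D) * (r1 + r2) * \<alpha> + D * (r1\<^sup>2 + r2\<^sup>2) / 4
          + r1 * r2 * (D * (1 + w)) / 2 - r1 * r2 * D / 2"
      by (simp add: field_simps power2_eq_square)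
    also have "\<dots> = D * ((r1 - r2)\<^sup>2 / 4)"
      unfolding sD k by (simp add: algebra_simps power2_eq_square)
    finally show ?thesis
      using \<open>D > 0\<close> by simp
  qed
  also have "\<dots> = (\<bar>r1 - r2\<bar> / 2)\<^sup>2"
    by (simp add: power_divide)
  finally show ?thesis
    by (simp add: power2_eq_iff_nonneg)
qed

lemma dist_midpoint_foot_on_bisector:
  fixes F G P d :: "real^2" and s :: real
  assumes "P \<noteq> F" "P \<noteq> G" "sgn (P - F) \<noteq> sgn (P - G)" "d \<noteq> 0"
    and bisector: "inner d (sgn (P - F)) = inner d (sgn (P - G))"
    and foot: "inner (P + s *\<^sub>R d - F) d = 0"
  shows "dist (P + s *\<^sub>R d) (midpoint F G) = \<bar>dist P F - dist P G\<bar> / 2"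
proof -
  define u v where "u = sgn (P - F)" and "v = sgn (P - G)"
  have PF: "P - F = dist P F *\<^sub>R u" and PG: "P - G = dist P G *\<^sub>R v"
    using assms(1,2) unfolding u_def v_def by (simp_all add: dist_norm sgn_div_norm)
  have "P + s *\<^sub>R d - F = dist P F *\<^sub>R u + s *\<^sub>R d"
    by (simp add: PF[symmetric] algebra_simps)
  with foot have "inner d (dist P F *\<^sub>R u + s *\<^sub>R d) = 0"
    by (simp only: inner_commute)
  moreover have "norm u = 1" "norm v = 1"
    using assms(1,2) unfolding u_def v_def by (simp_all add: norm_sgn)
  ultimately have "norm (s *\<^sub>R d + (dist P F / 2) *\<^sub>R u + (dist P G / 2) *\<^sub>R v)
      = \<bar>dist P F - dist P G\<bar> / 2"
    using assms(3,4) bisector unit_bisector_inner_sq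
    by (intro norm_foot_on_bisector) (auto simp: u_def v_def inner_commute)
  moreover have "P + s *\<^sub>R d - midpoint F G
      = s *\<^sub>R d + (1 / 2) *\<^sub>R (P - F) + (1 / 2) *\<^sub>R (P - G)"
    by (simp add: midpoint_def vec_eq_iff field_simps)
  then have "P + s *\<^sub>R d - midpoint F G
      = s *\<^sub>R d + (dist P F / 2) *\<^sub>R u + (dist P G / 2) *\<^sub>R v"
    unfolding PF PG by simp
  ultimately show ?thesis
    by (simp only: dist_norm)
qed

lemma has_real_derivative_dist_line:
  fixes P d F :: "'a::real_inner"
  assumes "P \<noteq> F"
  shows "((\<lambda>t. dist (P + t *\<^sub>R d) F) has_real_derivative inner (sgn (P - F)) d) (at 0)"
proof -
  have "((\<lambda>t. P + t *\<^sub>R d - F) has_derivative (\<lambda>t. t *\<^sub>R d)) (at 0)"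
    by (auto intro!: derivative_eq_intros)
  moreover have "(norm has_derivative (\<lambda>h. inner h (sgn (P - F)))) (at (P + 0 *\<^sub>R d - F))"
    using has_derivative_norm[of "P - F"] assms by simp
  ultimately have "((\<lambda>t. norm (P + t *\<^sub>R d - F))
      has_derivative (\<lambda>t. inner (t *\<^sub>R d) (sgn (P - F)))) (at 0)"
    by (rule has_derivative_compose[unfolded o_def])
  moreover have "(\<lambda>t. inner (t *\<^sub>R d) (sgn (P - F))) = (*) (inner (sgn (P - F)) d)"
    by (auto simp: inner_commute)
  ultimately show ?thesis
    by (simp add: has_field_derivative_def dist_norm)
qed

lemma hyperbola_point_foci:
  assumes "is_hyperbola F G a" "P \<in> hyperbola F G a"
  shows "P \<noteq> F" "P \<noteq> G" "sgn (P - F) \<noteq> sgn (P - G)"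
proof -
  have branch: "\<bar>dist P F - dist P G\<bar> < dist F G"
    using assms unfolding is_hyperbola_def hyperbola_def by simp
  then show "P \<noteq> F" "P \<noteq> G"
    by (auto simp: dist_commute)
  show "sgn (P - F) \<noteq> sgn (P - G)"
  proof
    assume same: "sgn (P - F) = sgn (P - G)"
    have "G - F = norm (P - F) *\<^sub>R sgn (P - F) - norm (P - G) *\<^sub>R sgn (P - G)"
      using \<open>P \<noteq> F\<close> \<open>P \<noteq> G\<close> by (simp add: sgn_div_norm)
    also have "\<dots> = (dist P F - dist P G) *\<^sub>R sgn (P - F)"
      using same by (simp add: dist_norm scaleR_diff_left)
    finally have "G - F = (dist P F - dist P G) *\<^sub>R sgn (P - F)" .
    then have "dist F G = \<bar>dist P F - dist P G\<bar>"
      using \<open>P \<noteq> F\<close> by (simp add: dist_norm norm_minus_commute[of F] norm_sgn)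
    with branch show False
      by simp
  qed
qed

lemma tangent_to_hyperbola_foot_dist_center:
  assumes hyp: "is_hyperbola F G a" and tangent: "tangent_to_hyperbola F G a L"
    and "M \<in> L" and foot: "\<forall>X\<in>L. inner (X - M) (M - F) = 0"
  shows "dist M (midpoint F G) = a"
proof -
  obtain P d where "d \<noteq> 0" and P: "P \<in> hyperbola F G a"
    and L: "L = {P + t *\<^sub>R d | t. True}" and deriv: "((\<lambda>t. dist (P + t *\<^sub>R d) F - dist (P + t *\<^sub>R d) G) has_real_derivative 0) (at 0)"
    using tangent unfolding tangent_to_hyperbola_def by blast
  note foci = hyperbola_point_foci[OF hyp P]
  obtain s where M: "M = P + s *\<^sub>R d"
    using \<open>M \<in> L\<close> L by blast
  have "inner (P + 0 *\<^sub>R d - M) (M - F) = 0" "inner (P + 1 *\<^sub>R d - M) (M - F) = 0"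
    using foot unfolding L by blast+
  then have "inner (P + s *\<^sub>R d - F) d = 0"
    unfolding M by (simp add: inner_simps inner_commute)
  moreover have "inner d (sgn (P - F)) = inner d (sgn (P - G))"
  proof -
    have "((\<lambda>t. dist (P + t *\<^sub>R d) F - dist (P + t *\<^sub>R d) G) has_real_derivative
        inner (sgn (P - F)) d - inner (sgn (P - G)) d) (at 0)"
      by (intro DERIV_diff has_real_derivative_dist_line foci)
    from DERIV_unique[OF this deriv] show ?thesis
      by (simp add: inner_commute)
  qed
  ultimately have "dist M (midpoint F G) = \<bar>dist P F - dist P G\<bar> / 2"
    unfolding M using dist_midpoint_foot_on_bisector foci \<open>d \<noteq> 0\<close> by blast
  with P show ?thesis
    unfolding hyperbola_def by simp
qed

lemma line_through_midpoint_orthogonal: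
  fixes F X Y :: "real^2"
  assumes "dist F X = dist F Y"
  shows "midpoint X Y \<in> line_through X Y"
    and "\<forall>Z\<in>line_through X Y. inner (Z - midpoint X Y) (midpoint X Y - F) = 0"
proof -
  show "midpoint X Y \<in> line_through X Y"
    unfolding line_through_def midpoint_def
    by (auto intro!: exI[of _ "1/2"] simp: vec_eq_iff field_simps)
  have "inner (Y - X) (midpoint X Y - F) = ((norm (Y - F))\<^sup>2 - (norm (X - F))\<^sup>2) / 2"
    by (simp add: midpoint_def power2_norm_eq_inner inner_simps inner_commute field_simps)
  also have "\<dots> = 0"
    using assms by (simp add: dist_norm norm_minus_commute)
  finally have orth: "inner (Y - X) (midpoint X Y - F) = 0" .
  have "X + t *\<^sub>R (Y - X) - midpoint X Y = (t - 1 / 2) *\<^sub>R (Y - X)" for t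
    by (simp add: midpoint_def vec_eq_iff field_simps)
  with orth show "\<forall>Z\<in>line_through X Y. inner (Z - midpoint X Y) (midpoint X Y - F) = 0"
    unfolding line_through_def by auto
qed

lemma tangent_line_through_midpoint_dist_center:
  assumes "is_hyperbola F G a" "tangent_to_hyperbola F G a (line_through X Y)"
    and "dist F X = dist F Y"
  shows "dist (midpoint X Y) (midpoint F G) = a"
  using tangent_to_hyperbola_foot_dist_center[OF assms(1,2)]
    line_through_midpoint_orthogonal[OF assms(3)] by blast

lemma inner_orthogonal_if_equidistant:
  fixes P Q X Y :: "'a::real_inner"
  assumes "dist X P = dist Y P" "dist X Q = dist Y Q"
  shows "inner (Y - X) (P - Q) = 0"
proof -
  have "2 * inner (Y - X) (P - Q)
      = ((dist X P)\<^sup>2 - (dist Y P)\<^sup>2) - ((dist X Q)\<^sup>2 - (dist Y Q)\<^sup>2)"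
    unfolding dist_norm power2_norm_eq_inner
    by (simp add: inner_diff_left inner_diff_right inner_commute algebra_simps)
  then show ?thesis
    using assms by simp
qed

lemma equidistant_point_unique:
  fixes P Q X Y Z :: "real^2"
  assumes "\<not> collinear {X, Y, Z}"
    and "dist X P = r" "dist Y P = r" "dist Z P = r"
    and "dist X Q = s" "dist Y Q = s" "dist Z Q = s"
  shows "P = Q"
proof (rule ccontr)
  assume "P \<noteq> Q"
  moreover have "inner (Y - X) (P - Q) = 0" "inner (Z - X) (P - Q) = 0"
    using assms(2-7) by (simp_all add: inner_orthogonal_if_equidistant)
  ultimately have "collinear {0, Y - X, Z - X}"
    by (intro collinear_if_orthogonal_to_nonzero[of "P - Q"]) simp_all
  then have "collinear {Y, X, Z}"
    by (simp add: collinear_3)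
  with assms(1) show False
    by (simp add: insert_commute)
qed

lemma collinear_scaled_translation_imp:
  fixes c :: "'a::real_vector"
  assumes "collinear ((\<lambda>x. c + r *\<^sub>R x) ` S)" "r \<noteq> 0"
  shows "collinear S"
proof -
  obtain u where u: "\<forall>x\<in>S. \<forall>y\<in>S. \<exists>k. (c + r *\<^sub>R x) - (c + r *\<^sub>R y) = k *\<^sub>R u"
    using assms(1) unfolding collinear_def by blast
  have "\<exists>k. x - y = k *\<^sub>R u" if xy: "x \<in> S" "y \<in> S" for x y
  proof -
    obtain k where "(c + r *\<^sub>R x) - (c + r *\<^sub>R y) = k *\<^sub>R u"
      using u xy by blast
    then have "r *\<^sub>R (x - y) = k *\<^sub>R u"
      by (simp add: scaleR_diff_right)
    then have "x - y = (k / r) *\<^sub>R u"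
      using assms(2) by (simp add: eq_vector_fraction_iff)
    then show ?thesis ..
  qed
  then show ?thesis
    unfolding collinear_def by blast
qed

lemma collinear_midpoints_imp_collinear:
  fixes A B C :: "'a::real_vector"
  assumes "collinear {midpoint A B, midpoint B C, midpoint C A}"
  shows "collinear {A, B, C}"
proof (rule collinear_scaled_translation_imp)
  \<comment> \<open>the homothety with ratio -1/2 about the centroid maps the triangle to its medial triangle\<close>
  have "(\<lambda>x. (1 / 2) *\<^sub>R (A + B + C) + (- 1 / 2) *\<^sub>R x) ` {A, B, C}
      = {midpoint B C, midpoint C A, midpoint A B}"
    by (simp add: midpoint_def algebra_simps)
  with assms show "collinear ((\<lambda>x. (1 / 2) *\<^sub>R (A + B + C) + (- 1 / 2) *\<^sub>R x) ` {A, B, C})"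
    by (simp add: insert_commute)
qed simp

lemma dist_midpoint_nine_point_center:
  fixes A B C P :: "'a::real_normed_vector"
  shows "dist (midpoint A B) ((1 / 2) *\<^sub>R (A + B + C - P)) = dist P C / 2"
proof -
  have "midpoint A B - (1 / 2) *\<^sub>R (A + B + C - P) = (1 / 2) *\<^sub>R (P - C)"
    by (simp add: midpoint_def algebra_simps)
  then show ?thesis
    by (simp add: dist_norm)
qed

lemma norm_add3_less:
  fixes x y z :: "'a::real_inner"
  assumes "norm x = R" "norm y = R" "norm z = R" "x \<noteq> y"
  shows "norm (x + y + z) < 3 * R"
proof -
  have "norm (x + y) \<noteq> norm x + norm y"
  proof
    assume "norm (x + y) = norm x + norm y"
    then have "norm x *\<^sub>R y = norm y *\<^sub>R x"
      by (simp only: norm_triangle_eq)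
    then have "R *\<^sub>R y = R *\<^sub>R x"
      using assms(1,2) by simp
    moreover have "R \<noteq> 0"
      using assms(1,2,4) by auto
    ultimately show False
      using assms(4) by simp
  qed
  then have "norm (x + y) < 2 * R"
    using norm_triangle_ineq[of x y] assms(1,2) by linarith
  then show ?thesis
    using norm_triangle_ineq[of "x + y" z] assms(3) by linarith
qed

theorem corollary2p5:
  fixes A B C F1 F2 :: "real^2" and a :: real
  assumes "\<not> collinear {A, B, C}"
    and "is_hyperbola F1 F2 a"
    and "circumscribed_about_hyperbola A B C F1 F2 a"
    and "is_circumcenter F1 A B C"
  shows "1 < hyperbola_eccentricity F1 F2 a \<and> hyperbola_eccentricity F1 F2 a < 3"
proof -
  have "0 < a" and "2 * a < dist F1 F2"
    using assms(2) unfolding is_hyperbola_def by auto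
  define R where "R = dist F1 C"
  have FA: "dist F1 A = R" and FB: "dist F1 B = R"
    using assms(4) unfolding is_circumcenter_def R_def by auto
  define N where "N = (1 / 2) *\<^sub>R (A + B + C - F1)"
  \<comment> \<open>the feet of the perpendiculars from F1 to the sides are the midpoints of the sides\<close>
  have to_center: "dist (midpoint A B) (midpoint F1 F2) = a"
    "dist (midpoint B C) (midpoint F1 F2) = a" "dist (midpoint C A) (midpoint F1 F2) = a"
    using assms(2,3) FA FB tangent_line_through_midpoint_dist_center[of F1 F2 a]
    unfolding circumscribed_about_hyperbola_def R_def by auto
  have to_N: "dist (midpoint A B) N = R / 2" "dist (midpoint B C) N = R / 2"
    "dist (midpoint C A) N = R / 2"
    using dist_midpoint_nine_point_center[of A B C F1] dist_midpoint_nine_point_center[of B C A F1]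
      dist_midpoint_nine_point_center[of C A B F1] FA FB
    unfolding N_def R_def by (simp_all add: add_ac)
  have "\<not> collinear {midpoint A B, midpoint B C, midpoint C A}"
    using assms(1) collinear_midpoints_imp_collinear by blast
  from equidistant_point_unique[OF this to_center to_N]
  have center: "midpoint F1 F2 = N" .
  with to_center(1) to_N(1) have "a = R / 2"
    by simp
  have "F1 + F2 = A + B + C - F1"
    using center unfolding N_def by (simp add: midpoint_def)
  then have "F2 - F1 = (A - F1) + (B - F1) + (C - F1)"
    by (simp add: algebra_simps)
  moreover have "A - F1 \<noteq> B - F1"
    using assms(1) by auto
  ultimately have "dist F1 F2 < 3 * R"
    using norm_add3_less FA FB R_def by (metis dist_commute dist_norm)
  with \<open>0 < a\<close> \<open>2 * a < dist F1 F2\<close> \<open>a = R / 2\<close> show ?thesis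
    unfolding hyperbola_eccentricity_def by (simp add: field_simps)
qed

end
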